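(* Let $P\subset\mathbb{R}^D$ be an $(\epsilon_1,\epsilon_2)$-significant instance of $k$-center clustering with $z$ outliers, $|P|=n$, and let $\eta,\delta\in(0,1)$. Consider the following algorithm: (1) sample a set $S$ of $\frac{3k}{\delta^2\epsilon_1}\log\frac{2k}{\eta}$ points uniformly at random from $P$; (2) let $z'=\frac{1}{\eta}\frac{\epsilon_2}{k}|S|$ and solve $k$-center clustering with $z'$ outliers on $S$ using any $c$-approximation algorithm with $c\ge 1$; output the set $H$ of $k$ returned centers. If $\frac{\epsilon_1}{\epsilon_2}>\frac{1}{\eta(1-\delta)}$, then with probability at least $(1-\eta)^2$, $\Delta^{-z}_{\infty}(P,H)\le(c+2)r_{opt}$.
   Context: For a finite $H\subset\mathbb{R}^D$ and a point $p$, $dist(p,H)=\min_{q\in H}\|p-q\|$. For a finite point set $Q$ and integer $0<w<|Q|$, $\Delta^{-w}_{\infty}(Q,H)=\min\{\max_{p\in Q'}dist(p,H): Q'\subset Q, |Q'|=|Q|-w\}$. The $k$-center clustering with $w$ outliers problem on $Q$ asks for $k$ centers $C\subset\mathbb{R}^D$ minimizing $\Delta^{-w}_{\infty}(Q,C)$; a $c$-approximation algorithm returns $k$ centers whose value is at most $c$ times the optimum. $r_{opt}$ is the optimal value for $P$ with $z$ outliers. $P_{opt}\subset P$ with $|P_{opt}|=n-z$ denotes the set of inliers of an optimal solution for $P$, and $C^*_1,\dots,C^*_k$ the optimal clusters forming $P_{opt}$. The instance is $(\epsilon_1,\epsilon_2)$-significant ($\epsilon_1,\epsilon_2>0$) if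 $\min_j|C^*_j|\ge\frac{\epsilon_1}{k}n$ and $z=\frac{\epsilon_2}{k}n$. Sampling uniformly at random means each sample point is drawn independently and uniformly from $P$ ($S$ is regarded as a multiset). *)

theory Defs
  imports "HOL-Analysis.Analysis" "HOL-Probability.Probability" "HOL-Library.Multiset"
begin

definition dist_set :: "'a::euclidean_space \<Rightarrow> 'a set \<Rightarrow> real" where
  "dist_set p H = Min ((\<lambda>q. dist p q) ` H)"

definition max_dist :: "'a::euclidean_space multiset \<Rightarrow> 'a set \<Rightarrow> real" where
  "max_dist Q' H = (if Q' = {#} then 0 else Max ((\<lambda>p. dist_set p H) ` set_mset Q'))"

definition Delta_out :: "'a::euclidean_space multiset \<Rightarrow> nat \<Rightarrow> 'a set \<Rightarrow> real" where
  "Delta_out Q w H = Min {max_dist Q' H | Q'. Q' \<subseteq># Q \<and> size Q' = size Q - w}"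

definition kcenter_opt :: "'a::euclidean_space multiset \<Rightarrow> nat \<Rightarrow> nat \<Rightarrow> real" where
  "kcenter_opt Q k w = Inf {Delta_out Q w C | C. finite C \<and> card C = k}"

definition significant ::
  "'a::euclidean_space set \<Rightarrow> nat \<Rightarrow> nat \<Rightarrow> real \<Rightarrow> real \<Rightarrow> bool" where
  "significant P k z \<epsilon>1 \<epsilon>2 \<longleftrightarrow>
     (let n = card P; r = kcenter_opt (mset_set P) k z in
      real z = \<epsilon>2 / real k * real n \<and>
      (\<exists>(cs :: nat \<Rightarrow> 'a) (Cl :: nat \<Rightarrow> 'a set) Popt.
          inj_on cs {..<k} \<and>
          Delta_out (mset_set P) z (cs ` {..<k}) = r \<and>
          Popt \<subseteq> P \<and> card Popt = n - z \<and>
          Popt = (\<Union>j<k. Cl j) \<and>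
          (\<forall>i<k. \<forall>j<k. i \<noteq> j \<longrightarrow> Cl i \<inter> Cl j = {}) \<and>
          (\<forall>j<k. \<forall>p\<in>Cl j. dist p (cs j) \<le> r) \<and>
          (\<forall>j<k. real (card (Cl j)) \<ge> \<epsilon>1 / real k * real n)))"

end

theory Submission
  imports Defs
begin

(* Call a sample good if it contains at most z' outliers of the optimal solution and more than
   z' points of every optimal cluster.  On a good sample the optimal centres show that the optimum
   with z' outliers is at most r_opt, so the c-approximate centres H leave at most z' sample points
   farther than c r_opt from H.  As every cluster has more than z' sample points, each cluster keeps
   a point within c r_opt of H, and by the triangle inequality all inliers are within (c + 2) r_opt.
   Markov's inequality bounds the probability of drawing too many outliers by \<eta>; a Chernoff bound
   and a union bound over the k clusters bound the probability that some cluster is undersampled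
   by \<eta>/2.  The two good events are positively correlated (Harris inequality): replacing a
   sampled point by an outlier can only destroy either of them.  Hence a good sample occurs with
   probability at least (1 - \<eta>)^2. *)

definition tuples :: "'a set \<Rightarrow> nat \<Rightarrow> 'a list set" where
  "tuples A m = {xs. set xs \<subseteq> A \<and> length xs = m}"

lemma tuples_0 [simp]: "tuples A 0 = {[]}"
  by (auto simp: tuples_def)

lemma tuples_Suc: "tuples A (Suc m) = (\<lambda>(x, xs). x # xs) ` (A \<times> tuples A m)"
  by (auto simp: tuples_def length_Suc_conv image_iff)

lemma finite_tuples: "finite A \<Longrightarrow> finite (tuples A m)"
  unfolding tuples_def by (rule finite_lists_length_eq)

lemma card_tuples: "finite A \<Longrightarrow> card (tuples A m) = card A ^ m"
  unfolding tuples_def by (rule card_lists_length_eq)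

lemma tuples_nonempty:
  assumes "A \<noteq> {}"
  shows "tuples A m \<noteq> {}"
proof -
  obtain x where "x \<in> A" using assms by blast
  then have "replicate m x \<in> tuples A m" by (simp add: tuples_def set_replicate_conv_if)
  then show ?thesis by blast
qed

lemma sum_tuples_Suc:
  assumes "finite A"
  shows "(\<Sum>xs\<in>tuples A (Suc m). f xs) = (\<Sum>x\<in>A. \<Sum>xs\<in>tuples A m. f (x # xs))"
proof -
  have "inj_on (\<lambda>(x, xs). x # xs) (A \<times> tuples A m)"
    by (auto simp: inj_on_def)
  then have "(\<Sum>xs\<in>tuples A (Suc m). f xs) = (\<Sum>(x, xs)\<in>A \<times> tuples A m. f (x # xs))"
    unfolding tuples_Suc by (simp add: sum.reindex case_prod_unfold)
  then show ?thesis
    by (simp add: sum.cartesian_product)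
qed

lemma pair_pmf_of_set:
  assumes "finite A" "A \<noteq> {}" "finite B" "B \<noteq> {}"
  shows "pair_pmf (pmf_of_set A) (pmf_of_set B) = pmf_of_set (A \<times> B)"
proof (rule pmf_eqI)
  fix p :: "'a \<times> 'b"
  show "pmf (pair_pmf (pmf_of_set A) (pmf_of_set B)) p = pmf (pmf_of_set (A \<times> B)) p"
    using assms by (cases p) (simp add: pmf_pair card_cartesian_product indicator_def)
qed

lemma replicate_pmf_of_set:
  assumes "finite A" "A \<noteq> {}"
  shows "replicate_pmf m (pmf_of_set A) = pmf_of_set (tuples A m)"
proof (induction m)
  case 0
  then show ?case by (simp add: pmf_of_set_singleton)
next
  case (Suc m)
  have "replicate_pmf (Suc m) (pmf_of_set A) =
        map_pmf (\<lambda>(x, xs). x # xs) (pair_pmf (pmf_of_set A) (pmf_of_set (tuples A m)))"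
    by (simp add: Suc pair_pmf_def map_bind_pmf bind_return_pmf map_pmf_def bind_assoc_pmf)
  also have "\<dots> = map_pmf (\<lambda>(x, xs). x # xs) (pmf_of_set (A \<times> tuples A m))"
    using assms by (simp add: pair_pmf_of_set finite_tuples tuples_nonempty)
  also have "\<dots> = pmf_of_set (tuples A (Suc m))"
    unfolding tuples_Suc using assms
    by (intro map_pmf_of_set_inj) (auto simp: inj_on_def finite_tuples tuples_nonempty)
  finally show ?case .
qed

lemma prob_replicate_pmf_of_set:
  assumes "finite A" "A \<noteq> {}"
  shows "measure_pmf.prob (replicate_pmf m (pmf_of_set A)) E =
           card (tuples A m \<inter> E) / card A ^ m"
  using assms
  by (simp add: replicate_pmf_of_set measure_pmf_of_set finite_tuples tuples_nonempty card_tuples)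

definition hits :: "'a set \<Rightarrow> 'a list \<Rightarrow> nat" where
  "hits C xs = length (filter (\<lambda>x. x \<in> C) xs)"

lemma hits_Nil [simp]: "hits C [] = 0"
  by (simp add: hits_def)

lemma hits_Cons [simp]: "hits C (x # xs) = (if x \<in> C then 1 else 0) + hits C xs"
  by (simp add: hits_def)

lemma hits_list_update_le: "u \<notin> C \<Longrightarrow> hits C (xs[i := u]) \<le> hits C xs"
  by (induction xs arbitrary: i) (auto split: nat.split)

lemma size_filter_mset_mset_notin_eq_hits_Diff:
  assumes "set xs \<subseteq> A"
  shows "size {#x \<in># mset xs. x \<notin> I#} = hits (A - I) xs"
  using assms by (induction xs) auto

lemma size_filter_mset_mset_eq_hits: "size {#x \<in># mset xs. x \<in> C#} = hits C xs"
  by (metis hits_def mset_filter size_mset)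

lemma sum_tuples_power_hits:
  fixes t :: real
  assumes "finite A" "C \<subseteq> A"
  shows "(\<Sum>xs\<in>tuples A m. t ^ hits C xs) = (real (card A) - real (card C) + real (card C) * t) ^ m"
proof (induction m)
  case (Suc m)
  have "(\<Sum>x\<in>A. t ^ (if x \<in> C then 1 else 0)) = (\<Sum>x\<in>C. t) + (\<Sum>x\<in>A - C. 1)"
    using assms by (subst sum.subset_diff[of C A]) (auto intro!: sum.cong)
  also have "\<dots> = real (card A) - real (card C) + real (card C) * t"
    using assms by (simp add: card_Diff_subset of_nat_diff card_mono finite_subset)
  finally have one_step: "(\<Sum>x\<in>A. t ^ (if x \<in> C then 1 else 0)) = \<dots>" .
  have "(\<Sum>xs\<in>tuples A (Suc m). t ^ hits C xs) =
          (\<Sum>x\<in>A. t ^ (if x \<in> C then 1 else 0)) * (\<Sum>xs\<in>tuples A m. t ^ hits C xs)"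
    using assms by (simp add: sum_tuples_Suc power_add sum_product)
  then show ?case using Suc one_step by simp
qed simp

lemma sum_tuples_hits:
  assumes "finite A" "C \<subseteq> A"
  shows "real (card A) * (\<Sum>xs\<in>tuples A m. real (hits C xs)) = real m * real (card C) * real (card A) ^ m"
proof (induction m)
  case (Suc m)
  have card_C: "(\<Sum>x\<in>A. if x \<in> C then 1 else 0 :: real) = real (card C)"
    using assms by (simp add: sum.If_cases Int_absorb1 finite_subset)
  have "(\<Sum>xs\<in>tuples A (Suc m). real (hits C xs)) =
          (\<Sum>x\<in>A. \<Sum>xs\<in>tuples A m. (if x \<in> C then 1 else 0) + real (hits C xs))"
    using assms by (simp add: sum_tuples_Suc) (auto intro!: sum.cong)
  also have "\<dots> = (\<Sum>x\<in>A. (if x \<in> C then 1 else 0) * real (card A ^ m) +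
                                (\<Sum>xs\<in>tuples A m. real (hits C xs)))"
    using assms by (simp add: sum.distrib card_tuples mult.commute)
  also have "\<dots> = real (card C) * real (card A) ^ m + real (card A) * (\<Sum>xs\<in>tuples A m. real (hits C xs))"
    by (simp add: sum.distrib sum_distrib_right[symmetric] card_C)
  finally show ?case using Suc by (simp add: algebra_simps)
qed simp

lemma markov_prob_hits_ge:
  assumes "finite A" "A \<noteq> {}" "C \<subseteq> A" "a > 0"
  shows "measure_pmf.prob (replicate_pmf m (pmf_of_set A)) {xs. a \<le> hits C xs}
           \<le> real m * real (card C) / (real (card A) * real a)"
proof -
  define E where "E = tuples A m \<inter> {xs. a \<le> hits C xs}"
  have n: "real (card A) > 0" using assms by (simp add: card_gt_0_iff)
  have "real (card E) * real a = (\<Sum>xs\<in>E. real a)"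
    by simp
  also have "\<dots> \<le> (\<Sum>xs\<in>E. real (hits C xs))"
    by (intro sum_mono) (auto simp: E_def)
  also have "\<dots> \<le> (\<Sum>xs\<in>tuples A m. real (hits C xs))"
    using assms by (intro sum_mono2 finite_tuples) (auto simp: E_def)
  finally have "real (card A) * (real (card E) * real a) \<le> real m * real (card C) * real (card A) ^ m"
    using sum_tuples_hits[OF assms(1,3), of m] n by (metis mult_left_mono less_imp_le)
  then show ?thesis
    using assms n unfolding prob_replicate_pmf_of_set[OF assms(1,2)] E_def[symmetric]
    by (simp add: field_simps)
qed

lemma one_minus_mult_ln_one_minus_ge:
  fixes d :: real
  assumes "0 \<le> d" "d < 1"
  shows "- d + d^2 / 2 \<le> (1 - d) * ln (1 - d)"
proof -
  define f where "f x = (1 - x) * ln (1 - x) + x - x^2 / 2" for x :: real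
  have "f 0 \<le> f d"
  proof (rule DERIV_nonneg_imp_nondecreasing[OF assms(1)])
    fix x :: real
    assume "0 \<le> x" "x \<le> d"
    then have "x < 1" using assms by simp
    then have "(f has_real_derivative (- ln (1 - x) - x)) (at x)"
      unfolding f_def by - (rule derivative_eq_intros refl | simp)+
    moreover have "ln (1 - x) \<le> - x"
      using ln_le_minus_one[of "1 - x"] \<open>x < 1\<close> by simp
    ultimately show "\<exists>y. (f has_real_derivative y) (at x) \<and> 0 \<le> y" by auto
  qed
  then show ?thesis by (simp add: f_def)
qed

lemma chernoff_prob_hits_le:
  fixes \<delta> :: real
  assumes "finite A" "A \<noteq> {}" "C \<subseteq> A" "0 < \<delta>" "\<delta> < 1"
    and \<mu>_def: "\<mu> = real m * real (card C) / real (card A)"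
    and a: "real a \<le> (1 - \<delta>) * \<mu>"
  shows "measure_pmf.prob (replicate_pmf m (pmf_of_set A)) {xs. hits C xs \<le> a} \<le> exp (- (\<delta>^2) * \<mu> / 2)"
proof -
  define E where "E = tuples A m \<inter> {xs. hits C xs \<le> a}"
  define n where "n = real (card A)"
  define q where "q = real (card C) / n"
  define t where "t = 1 - \<delta>"
  have n: "n > 0" using assms by (simp add: n_def card_gt_0_iff)
  have q: "0 \<le> q" "q \<le> 1"
    using assms n by (auto simp: q_def n_def field_simps card_mono)
  have t: "0 < t" "t \<le> 1" using assms by (auto simp: t_def)
  have \<mu>: "\<mu> = real m * q" "\<mu> \<ge> 0" using q by (simp_all add: \<mu>_def q_def n_def)
  \<comment> \<open>Markov's inequality for \<open>t ^ hits C xs\<close>\<close>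
  have "real (card E) * t ^ a = (\<Sum>xs\<in>E. t ^ a)"
    by simp
  also have "\<dots> \<le> (\<Sum>xs\<in>E. t ^ hits C xs)"
    using t by (intro sum_mono power_decreasing) (auto simp: E_def)
  also have "\<dots> \<le> (\<Sum>xs\<in>tuples A m. t ^ hits C xs)"
    using assms t by (intro sum_mono2 finite_tuples) (auto simp: E_def)
  also have "\<dots> = (n * (1 - q * \<delta>)) ^ m"
  proof -
    have "real (card A) - real (card C) + real (card C) * t = n * (1 - q * \<delta>)"
      using n by (simp add: n_def q_def t_def field_simps)
    then show ?thesis by (simp add: sum_tuples_power_hits[OF assms(1,3)])
  qed
  also have "\<dots> = n ^ m * (1 - q * \<delta>) ^ m"
    by (simp add: power_mult_distrib)
  also have "\<dots> \<le> n ^ m * exp (- q * \<delta>) ^ m"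
    using q assms n exp_ge_add_one_self[of "- q * \<delta>"]
    by (intro mult_left_mono power_mono) (auto simp: mult_le_one)
  also have "exp (- q * \<delta>) ^ m = exp (- \<delta> * \<mu>)"
    by (simp add: exp_of_nat_mult[symmetric] \<mu> algebra_simps)
  finally have moment: "real (card E) * t ^ a \<le> n ^ m * exp (- \<delta> * \<mu>)" .
  have "exp ((1 - \<delta>) * \<mu> * ln t) \<le> exp (real a * ln t)"
    using a t by (simp add: mult_right_mono_neg)
  also have "\<dots> = t ^ a"
    using t by (simp add: exp_of_nat_mult)
  finally have t_pow: "exp ((1 - \<delta>) * \<mu> * ln t) \<le> t ^ a" .
  have "real (card E) / n ^ m \<le> exp (- \<delta> * \<mu>) / t ^ a"
    using moment n t by (simp add: field_simps)
  also have "\<dots> \<le> exp (- \<delta> * \<mu>) / exp ((1 - \<delta>) * \<mu> * ln t)"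
    using t_pow t by (intro divide_left_mono) auto
  also have "\<dots> = exp (\<mu> * (- \<delta> - (1 - \<delta>) * ln (1 - \<delta>)))"
    by (simp add: exp_diff[symmetric] t_def algebra_simps)
  also have "\<dots> \<le> exp (\<mu> * (- (\<delta>^2) / 2))"
    using one_minus_mult_ln_one_minus_ge[of \<delta>] assms \<mu> by (intro exp_mono mult_left_mono) auto
  finally show ?thesis
    unfolding prob_replicate_pmf_of_set[OF assms(1,2)] E_def[symmetric] n_def by (simp add: mult.commute)
qed

lemma Chebyshev_sum_lower_set:
  fixes F G :: "'b \<Rightarrow> 'a::linordered_idom"
  assumes "finite S" "\<And>x y. x \<in> S \<Longrightarrow> y \<in> S \<Longrightarrow> 0 \<le> (F x - F y) * (G x - G y)"
  shows "(\<Sum>x\<in>S. F x) * (\<Sum>x\<in>S. G x) \<le> of_nat (card S) * (\<Sum>x\<in>S. F x * G x)"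
proof -
  have "2 * (of_nat (card S) * (\<Sum>x\<in>S. F x * G x) - (\<Sum>x\<in>S. F x) * (\<Sum>x\<in>S. G x)) =
          (\<Sum>x\<in>S. \<Sum>y\<in>S. (F x - F y) * (G x - G y))"
    by (simp only: one_add_one[symmetric] algebra_simps)
      (simp add: algebra_simps sum_subtractf sum.distrib sum.swap[of "\<lambda>i j. F i * G j"]
        sum_distrib_left sum_distrib_right)
  also have "\<dots> \<ge> 0"
    using assms(2) by (intro sum_nonneg) auto
  finally show ?thesis by simp
qed

(* Harris' inequality.  Conditioning on the first entry, both partial sums are smallest on C, so
   Chebyshev's sum inequality applies. *)
lemma harris_tuples:
  fixes \<phi> :: "nat \<Rightarrow> real" and g :: "'a list \<Rightarrow> real"
  assumes "finite A" "C \<subseteq> A"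
    and "antimono \<phi>"
    and "\<And>xs i u. xs \<in> tuples A m \<Longrightarrow> i < m \<Longrightarrow> u \<in> C \<Longrightarrow> g (xs[i := u]) \<le> g xs"
  shows "(\<Sum>xs\<in>tuples A m. \<phi> (hits C xs)) * (\<Sum>xs\<in>tuples A m. g xs)
           \<le> real (card A) ^ m * (\<Sum>xs\<in>tuples A m. \<phi> (hits C xs) * g xs)"
  using assms(3,4)
proof (induction m arbitrary: \<phi> g)
  case (Suc m)
  define ind where "ind x = (if x \<in> C then 1 else 0 :: nat)" for x
  define F where "F x = (\<Sum>xs\<in>tuples A m. \<phi> (ind x + hits C xs))" for x
  define G where "G x = (\<Sum>xs\<in>tuples A m. g (x # xs))" for x
  have Cons_tuples: "x # xs \<in> tuples A (Suc m)" if "x \<in> A" "xs \<in> tuples A m" for x xs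
    using that by (simp add: tuples_def)
  have F_C: "F u \<le> F y" if "u \<in> C" for u y
    unfolding F_def ind_def using that by (intro sum_mono) (auto intro: antimonoD[OF Suc.prems(1)])
  have G_C: "G u \<le> G y" if "u \<in> C" "y \<in> A" for u y
    unfolding G_def using Suc.prems(2)[of "y # _" 0 u] that Cons_tuples by (intro sum_mono) simp
  have similarly_ordered: "0 \<le> (F x - F y) * (G x - G y)" if "x \<in> A" "y \<in> A" for x y
  proof -
    have "F x = F y" if "x \<in> C \<longleftrightarrow> y \<in> C"
      using that by (simp add: F_def ind_def)
    then show ?thesis
      using F_C G_C \<open>x \<in> A\<close> \<open>y \<in> A\<close> by (cases "x \<in> C"; cases "y \<in> C") (auto simp: mult_nonpos_nonpos)
  qed
  have fibre: "F x * G x \<le> real (card A) ^ m * (\<Sum>xs\<in>tuples A m. \<phi> (hits C (x # xs)) * g (x # xs))"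
    if "x \<in> A" for x
  proof -
    have "antimono (\<lambda>c. \<phi> (ind x + c))"
      by (auto intro!: antimonoI antimonoD[OF Suc.prems(1)])
    moreover have "g (x # xs[i := u]) \<le> g (x # xs)" if "xs \<in> tuples A m" "i < m" "u \<in> C" for xs i u
      using Suc.prems(2)[of "x # xs" "Suc i" u] that Cons_tuples \<open>x \<in> A\<close> by simp
    ultimately show ?thesis
      using Suc.IH[of "\<lambda>c. \<phi> (ind x + c)" "\<lambda>xs. g (x # xs)"] by (simp add: F_def G_def ind_def)
  qed
  have "(\<Sum>xs\<in>tuples A (Suc m). \<phi> (hits C xs)) * (\<Sum>xs\<in>tuples A (Suc m). g xs) =
          (\<Sum>x\<in>A. F x) * (\<Sum>x\<in>A. G x)"
    using assms(1) by (simp add: sum_tuples_Suc F_def G_def ind_def)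
  also have "\<dots> \<le> real (card A) * (\<Sum>x\<in>A. F x * G x)"
    using Chebyshev_sum_lower_set[OF assms(1) similarly_ordered] by simp
  also have "\<dots> \<le> real (card A) *
                   (\<Sum>x\<in>A. real (card A) ^ m * (\<Sum>xs\<in>tuples A m. \<phi> (hits C (x # xs)) * g (x # xs)))"
    using fibre by (intro mult_left_mono sum_mono) auto
  also have "\<dots> = real (card A) ^ Suc m * (\<Sum>xs\<in>tuples A (Suc m). \<phi> (hits C xs) * g xs)"
    using assms(1) by (simp add: sum_tuples_Suc sum_distrib_left mult.assoc)
  finally show ?case .
qed simp

lemma harris_prob_hits_le:
  assumes "finite A" "A \<noteq> {}" "C \<subseteq> A"
    and "\<And>xs i u. xs \<in> tuples A m \<Longrightarrow> i < m \<Longrightarrow> u \<in> C \<Longrightarrow> xs[i := u] \<in> E \<Longrightarrow> xs \<in> E"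
  shows "measure_pmf.prob (replicate_pmf m (pmf_of_set A)) {xs. hits C xs \<le> a} *
           measure_pmf.prob (replicate_pmf m (pmf_of_set A)) E
         \<le> measure_pmf.prob (replicate_pmf m (pmf_of_set A)) ({xs. hits C xs \<le> a} \<inter> E)"
proof -
  define T where "T = tuples A m"
  have card_eq: "(\<Sum>xs\<in>T. indicator X xs) = real (card (T \<inter> X))" for X
    using finite_tuples[OF assms(1)] by (simp add: T_def indicator_def sum.If_cases Int_def)
  have "(\<Sum>xs\<in>T. indicator {..a} (hits C xs)) * (\<Sum>xs\<in>T. indicator E xs)
          \<le> real (card A) ^ m * (\<Sum>xs\<in>T. indicator {..a} (hits C xs) * indicator E xs)"
    unfolding T_def
  proof (rule harris_tuples[OF assms(1,3)])
    show "antimono (\<lambda>c. indicator {..a} c :: real)"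
      by (auto intro!: antimonoI simp: indicator_def)
    show "indicator E (xs[i := u]) \<le> (indicator E xs :: real)"
      if "xs \<in> tuples A m" "i < m" "u \<in> C" for xs i u
      using assms(4)[OF that] by (auto simp: indicator_def)
  qed
  moreover have "indicator {..a} (hits C xs) = (indicator {xs. hits C xs \<le> a} xs :: real)" for xs
    by (simp add: indicator_def)
  ultimately have "(\<Sum>xs\<in>T. indicator {xs. hits C xs \<le> a} xs) * (\<Sum>xs\<in>T. indicator E xs)
                     \<le> real (card A) ^ m * (\<Sum>xs\<in>T. indicator ({xs. hits C xs \<le> a} \<inter> E) xs)"
    by (simp add: indicator_inter_arith)
  then have joint: "real (card (T \<inter> {xs. hits C xs \<le> a})) * real (card (T \<inter> E))
                     \<le> real (card A) ^ m * real (card (T \<inter> ({xs. hits C xs \<le> a} \<inter> E)))"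
    unfolding card_eq .
  have "card A > 0"
    using assms by (simp add: card_gt_0_iff)
  then show ?thesis
    unfolding prob_replicate_pmf_of_set[OF assms(1,2)] T_def[symmetric]
    using divide_right_mono[OF joint, of "real (card A) ^ m * real (card A) ^ m"] by simp
qed

lemma finite_submultisets: "finite {Q'. Q' \<subseteq># Q}"
proof -
  have "{Q'. Q' \<subseteq># Q} \<subseteq> mset ` {ys. set ys \<subseteq> set_mset Q \<and> length ys \<le> size Q}"
  proof
    fix Q' assume "Q' \<in> {Q'. Q' \<subseteq># Q}"
    moreover obtain ys where "mset ys = Q'" using ex_mset by blast
    ultimately show "Q' \<in> mset ` {ys. set ys \<subseteq> set_mset Q \<and> length ys \<le> size Q}"
      by (metis (mono_tags, lifting) image_eqI mem_Collect_eq set_mset_mono set_mset_mset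
          size_mset size_mset_mono)
  qed
  moreover have "finite {ys. set ys \<subseteq> set_mset Q \<and> length ys \<le> size Q}"
    by (rule finite_lists_length_le) simp
  ultimately show ?thesis using finite_subset by blast
qed

lemma exists_submultiset_size:
  assumes "n \<le> size Q"
  shows "\<exists>Q'. Q' \<subseteq># Q \<and> size Q' = n"
proof -
  obtain xs where xs: "mset xs = Q" using ex_mset by blast
  have "mset (take n xs) \<subseteq># mset xs"
    by (metis append_take_drop_id mset_append mset_subset_eq_add_left)
  then show ?thesis using xs assms by (intro exI[of _ "mset (take n xs)"]) auto
qed

lemma finite_Delta_out_candidates: "finite {max_dist Q' H | Q'. Q' \<subseteq># Q \<and> size Q' = size Q - w}"
proof -
  have "{max_dist Q' H | Q'. Q' \<subseteq># Q \<and> size Q' = size Q - w} \<subseteq> (\<lambda>Q'. max_dist Q' H) ` {Q'. Q' \<subseteq># Q}"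
    by auto
  then show ?thesis using finite_submultisets finite_subset by blast
qed

lemma Delta_out_le:
  assumes "Q' \<subseteq># Q" "size Q' = size Q - w"
  shows "Delta_out Q w H \<le> max_dist Q' H"
  unfolding Delta_out_def using assms by (intro Min_le finite_Delta_out_candidates) auto

lemma Delta_out_attained:
  obtains Q' where "Q' \<subseteq># Q" "size Q' = size Q - w" "Delta_out Q w H = max_dist Q' H"
proof -
  have "{max_dist Q' H | Q'. Q' \<subseteq># Q \<and> size Q' = size Q - w} \<noteq> {}"
    using exists_submultiset_size[of "size Q - w" Q] by auto
  then have "Delta_out Q w H \<in> {max_dist Q' H | Q'. Q' \<subseteq># Q \<and> size Q' = size Q - w}"
    unfolding Delta_out_def by (intro Min_in finite_Delta_out_candidates)
  then show ?thesis using that by blast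
qed

lemma dist_set_le: "finite H \<Longrightarrow> q \<in> H \<Longrightarrow> dist_set p H \<le> dist p q"
  unfolding dist_set_def by (rule Min_le) auto

lemma dist_set_attained:
  assumes "finite H" "H \<noteq> {}"
  obtains q where "q \<in> H" "dist_set p H = dist p q"
proof -
  have "dist_set p H \<in> (\<lambda>q. dist p q) ` H"
    unfolding dist_set_def using assms by (intro Min_in) auto
  then show ?thesis using that by blast
qed

lemma dist_set_nonneg: "finite H \<Longrightarrow> H \<noteq> {} \<Longrightarrow> dist_set p H \<ge> 0"
  by (metis dist_set_attained zero_le_dist)

lemma dist_set_triangle:
  assumes "finite H" "H \<noteq> {}"
  shows "dist_set p H \<le> dist p s + dist_set s H"
proof -
  obtain q where "q \<in> H" "dist_set s H = dist s q"
    using dist_set_attained[OF assms] by blast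
  then show ?thesis
    using dist_set_le[OF assms(1), of q p] dist_triangle[of p q s] by simp
qed

lemma dist_set_le_max_dist: "p \<in># Q \<Longrightarrow> dist_set p H \<le> max_dist Q H"
  unfolding max_dist_def by (auto intro!: Max_ge)

lemma max_dist_le:
  assumes "\<And>p. p \<in># Q \<Longrightarrow> dist_set p H \<le> r" "0 \<le> r"
  shows "max_dist Q H \<le> r"
  using assms by (auto simp: max_dist_def)

lemma max_dist_nonneg:
  assumes "finite H" "H \<noteq> {}"
  shows "max_dist Q H \<ge> 0"
proof (cases "Q = {#}")
  case False
  then obtain p where "p \<in># Q" by blast
  then show ?thesis
    using dist_set_nonneg[OF assms] dist_set_le_max_dist order.trans by metis
qed (simp add: max_dist_def)

lemma Delta_out_nonneg: "finite H \<Longrightarrow> H \<noteq> {} \<Longrightarrow> Delta_out Q w H \<ge> 0"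
  by (metis Delta_out_attained max_dist_nonneg)

lemma kcenter_opt_le:
  assumes "finite C" "card C = k" "k > 0"
  shows "kcenter_opt Q k w \<le> Delta_out Q w C"
  unfolding kcenter_opt_def
proof (rule cInf_lower)
  show "Delta_out Q w C \<in> {Delta_out Q w C |C. finite C \<and> card C = k}"
    using assms by auto
  show "bdd_below {Delta_out Q w C |C. finite C \<and> card C = k}"
    using assms by (intro bdd_belowI[of _ 0]) (auto intro!: Delta_out_nonneg)
qed

lemma Delta_out_le_if_few_outside:
  assumes "size {#p \<in># Q. p \<notin> I#} \<le> w"
    and "\<And>p. p \<in> I \<Longrightarrow> dist_set p H \<le> r" "0 \<le> r"
  shows "Delta_out Q w H \<le> r"
proof -
  have "size Q - w \<le> size {#p \<in># Q. p \<in> I#}"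
    using assms(1) multiset_partition[of Q "\<lambda>p. p \<in> I"] by (metis diff_le_mono2 diff_add_inverse2 size_union)
  then obtain Q' where Q': "Q' \<subseteq># {#p \<in># Q. p \<in> I#}" "size Q' = size Q - w"
    using exists_submultiset_size by blast
  then have "Q' \<subseteq># Q"
    using multiset_filter_subset subset_mset.order_trans by blast
  then have "Delta_out Q w H \<le> max_dist Q' H"
    using Q'(2) by (rule Delta_out_le)
  also have "\<dots> \<le> r"
    using Q'(1) assms(2,3) by (intro max_dist_le) (auto dest: mset_subset_eqD)
  finally show ?thesis .
qed

lemma submultiset_meets:
  assumes "Q' \<subseteq># Q" "size Q' = size Q - w" "w < size {#p \<in># Q. p \<in> C#}"
  obtains s where "s \<in># Q'" "s \<in> C"
proof (rule ccontr)
  assume "\<not> thesis"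
  then have "{#p \<in># Q'. p \<in> C#} = {#}"
    using that by (auto simp: filter_mset_eq_conv)
  moreover have "Q = Q' + (Q - Q')"
    using assms(1) by simp
  ultimately have "{#p \<in># Q. p \<in> C#} = {#p \<in># Q - Q'. p \<in> C#}"
    by (metis add_0 filter_union_mset)
  then have "size {#p \<in># Q. p \<in> C#} \<le> size (Q - Q')"
    by (metis multiset_filter_subset size_mset_mono)
  also have "\<dots> \<le> w"
    using size_Diff_submset[OF assms(1)] assms(2) by simp
  finally show False using assms(3) by simp
qed

lemma Delta_out_le_if_good_sample:
  fixes P :: "'a::euclidean_space set"
  assumes "finite P" "k > 0" "0 \<le> c" "0 \<le> r"
    and centers: "inj_on cs {..<k}"
    and inliers: "Popt \<subseteq> P" "card Popt = card P - z" "Popt = (\<Union>j<k. Cl j)"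
    and radius: "\<And>j p. j < k \<Longrightarrow> p \<in> Cl j \<Longrightarrow> dist p (cs j) \<le> r"
    and H: "finite H" "card H = k" "Delta_out S w H \<le> c * kcenter_opt S k w"
    and few_outliers: "size {#p \<in># S. p \<notin> Popt#} \<le> w"
    and clusters_hit: "\<And>j. j < k \<Longrightarrow> w < size {#p \<in># S. p \<in> Cl j#}"
  shows "Delta_out (mset_set P) z H \<le> (c + 2) * r"
proof -
  have H_ne: "H \<noteq> {}" using H(2) \<open>k > 0\<close> by auto
  have "finite (cs ` {..<k})" "card (cs ` {..<k}) = k"
    using centers by (simp_all add: card_image)
  moreover have "dist_set p (cs ` {..<k}) \<le> r" if "p \<in> Popt" for p
    using that inliers(3) radius by (auto intro: order.trans[OF dist_set_le])
  ultimately have "kcenter_opt S k w \<le> r"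
    using few_outliers \<open>0 \<le> r\<close> \<open>k > 0\<close>
    by (metis kcenter_opt_le Delta_out_le_if_few_outside order.trans)
  then have "Delta_out S w H \<le> c * r"
    using H(3) \<open>0 \<le> c\<close> by (meson mult_left_mono order.trans)
  then obtain S' where S': "S' \<subseteq># S" "size S' = size S - w" "max_dist S' H \<le> c * r"
    by (metis Delta_out_attained)
  have "dist_set p H \<le> (c + 2) * r" if "p \<in> Popt" for p
  proof -
    obtain j where j: "j < k" "p \<in> Cl j" using \<open>p \<in> Popt\<close> inliers(3) by blast
    obtain s where s: "s \<in># S'" "s \<in> Cl j"
      using submultiset_meets[OF S'(1,2) clusters_hit[OF j(1)]] .
    have "dist_set p H \<le> dist p s + dist_set s H"
      using dist_set_triangle[OF H(1) H_ne] .
    also have "\<dots> \<le> (dist p (cs j) + dist s (cs j)) + c * r"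
      using dist_triangle[of p s "cs j"] dist_commute[of s "cs j"] dist_set_le_max_dist[OF s(1), of H] S'(3)
      by linarith
    also have "\<dots> \<le> (c + 2) * r"
      using radius[OF j] radius[OF j(1) s(2)] by (simp add: algebra_simps)
    finally show ?thesis .
  qed
  moreover have "size {#p \<in># mset_set P. p \<notin> Popt#} \<le> z"
  proof -
    have "{p \<in> P. p \<notin> Popt} = P - Popt" by blast
    then show ?thesis
      using \<open>finite P\<close> inliers(1,2) by (simp add: card_Diff_subset finite_subset)
  qed
  ultimately show ?thesis
    using \<open>0 \<le> c\<close> \<open>0 \<le> r\<close> by (intro Delta_out_le_if_few_outside) auto
qed

lemma prob_few_outliers:
  assumes "finite P" "P \<noteq> {}" "Ou \<subseteq> P" "k > 0" "0 < \<eta>" "0 \<le> \<epsilon>2"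
    and "real (card Ou) \<le> \<epsilon>2 / real k * real (card P)"
  shows "measure_pmf.prob (replicate_pmf m (pmf_of_set P))
           {xs. hits Ou xs \<le> nat \<lfloor>1 / \<eta> * (\<epsilon>2 / real k) * real m\<rfloor>} \<ge> 1 - \<eta>"
proof -
  define y where "y = 1 / \<eta> * (\<epsilon>2 / real k) * real m"
  define z' where "z' = nat \<lfloor>y\<rfloor>"
  define M where "M = replicate_pmf m (pmf_of_set P)"
  have n: "real (card P) > 0" using assms by (simp add: card_gt_0_iff)
  have "y \<ge> 0" using assms by (simp add: y_def)
  then have "y \<le> real z' + 1" by (simp add: z'_def)
  have "measure_pmf.prob M {xs. z' + 1 \<le> hits Ou xs} \<le> real m * real (card Ou) / (real (card P) * real (z' + 1))"
    unfolding M_def using assms by (intro markov_prob_hits_ge) auto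
  also have "\<dots> = real m * (real (card Ou) / real (card P)) / real (z' + 1)"
    by simp
  also have "\<dots> \<le> real m * (\<epsilon>2 / real k) / real (z' + 1)"
    using assms n by (intro divide_right_mono mult_left_mono) (auto simp: pos_divide_le_eq)
  also have "\<dots> = \<eta> * y / real (z' + 1)"
    using assms by (simp add: y_def)
  also have "\<dots> \<le> \<eta> * (real z' + 1) / real (z' + 1)"
    using \<open>y \<le> real z' + 1\<close> assms by (intro divide_right_mono mult_left_mono) auto
  also have "\<dots> = \<eta>"
    by (simp add: add.commute)
  finally have "measure_pmf.prob M {xs. z' + 1 \<le> hits Ou xs} \<le> \<eta>" .
  moreover have "{xs. hits Ou xs \<le> z'} = space (measure_pmf M) - {xs. z' + 1 \<le> hits Ou xs}"
    by auto
  ultimately show ?thesis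
    unfolding M_def[symmetric] y_def[symmetric] z'_def[symmetric]
    using measure_pmf.prob_compl[of "{xs. z' + 1 \<le> hits Ou xs}" M] by simp
qed

lemma prob_cluster_undersampled:
  assumes "finite P" "P \<noteq> {}" "Cl \<subseteq> P" "k > 0" "0 < \<epsilon>1" "0 < \<epsilon>2"
    and "0 < \<eta>" "\<eta> < 1" "0 < \<delta>" "\<delta> < 1"
    and large: "\<epsilon>1 / real k * real (card P) \<le> real (card Cl)"
    and ratio: "\<epsilon>1 / \<epsilon>2 > 1 / (\<eta> * (1 - \<delta>))"
    and m: "real m \<ge> 3 * real k / (\<delta>^2 * \<epsilon>1) * ln (2 * real k / \<eta>)"
  shows "measure_pmf.prob (replicate_pmf m (pmf_of_set P))
           {xs. hits Cl xs \<le> nat \<lfloor>1 / \<eta> * (\<epsilon>2 / real k) * real m\<rfloor>} \<le> \<eta> / (2 * real k)"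
proof -
  define \<mu> where "\<mu> = real m * real (card Cl) / real (card P)"
  define L where "L = ln (2 * real k / \<eta>)"
  have n: "real (card P) > 0" using assms by (simp add: card_gt_0_iff)
  have \<mu>: "real m * \<epsilon>1 / real k \<le> \<mu>"
    using mult_left_mono[OF large, of "real m"] n by (simp add: \<mu>_def field_simps)
  have "\<epsilon>2 < (1 - \<delta>) * \<epsilon>1 * \<eta>"
    using ratio assms by (simp add: field_simps)
  then have "\<epsilon>2 * real m \<le> (1 - \<delta>) * \<epsilon>1 * \<eta> * real m"
    by (intro mult_right_mono) auto
  then have "1 / \<eta> * (\<epsilon>2 / real k) * real m \<le> (1 - \<delta>) * (real m * \<epsilon>1 / real k)"
    using assms by (simp add: field_simps)
  also have "\<dots> \<le> (1 - \<delta>) * \<mu>"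
    using \<mu> assms by (intro mult_left_mono) auto
  moreover have "real (nat \<lfloor>1 / \<eta> * (\<epsilon>2 / real k) * real m\<rfloor>)
                   \<le> 1 / \<eta> * (\<epsilon>2 / real k) * real m"
    using assms by simp
  ultimately have "real (nat \<lfloor>1 / \<eta> * (\<epsilon>2 / real k) * real m\<rfloor>) \<le> (1 - \<delta>) * \<mu>"
    by linarith
  then have "measure_pmf.prob (replicate_pmf m (pmf_of_set P))
               {xs. hits Cl xs \<le> nat \<lfloor>1 / \<eta> * (\<epsilon>2 / real k) * real m\<rfloor>} \<le> exp (- (\<delta>^2) * \<mu> / 2)"
    using assms by (intro chernoff_prob_hits_le[OF _ _ _ _ _ \<mu>_def]) auto
  also have "\<dots> \<le> exp (- L)"
  proof -
    have "\<delta>^2 * \<mu> \<ge> \<delta>^2 * (real m * \<epsilon>1 / real k)"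
      using \<mu> by (intro mult_left_mono) auto
    moreover have "\<delta>^2 * (real m * \<epsilon>1 / real k) \<ge> 3 * L"
      using m assms by (simp add: L_def field_simps)
    moreover have "\<eta> < 2 * real k"
      using assms by (simp add: less_le_trans[of \<eta> 1])
    then have "L > 0"
      using assms by (simp add: L_def)
    ultimately show ?thesis by simp
  qed
  also have "exp (- L) = \<eta> / (2 * real k)"
    using assms by (simp add: L_def exp_minus)
  finally show ?thesis .
qed

lemma prob_all_hits_gt:
  fixes M :: "'a list pmf"
  assumes "\<And>j. j < k \<Longrightarrow> measure_pmf.prob M {xs. hits (Cl j) xs \<le> a} \<le> \<beta>"
  shows "measure_pmf.prob M {xs. \<forall>j<k. a < hits (Cl j) xs} \<ge> 1 - real k * \<beta>"
proof -
  have "measure_pmf.prob M (\<Union>j<k. {xs. hits (Cl j) xs \<le> a})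
          \<le> (\<Sum>j<k. measure_pmf.prob M {xs. hits (Cl j) xs \<le> a})"
    by (intro measure_pmf.finite_measure_subadditive_finite) auto
  also have "\<dots> \<le> real k * \<beta>"
    using assms sum_mono[of "{..<k}" "\<lambda>j. measure_pmf.prob M {xs. hits (Cl j) xs \<le> a}" "\<lambda>_. \<beta>"] by simp
  finally have "measure_pmf.prob M (\<Union>j<k. {xs. hits (Cl j) xs \<le> a}) \<le> real k * \<beta>" .
  moreover have "{xs. \<forall>j<k. a < hits (Cl j) xs} =
                   space (measure_pmf M) - (\<Union>j<k. {xs. hits (Cl j) xs \<le> a})"
    by auto
  ultimately show ?thesis
    using measure_pmf.prob_compl[of "\<Union>j<k. {xs. hits (Cl j) xs \<le> a}" M] by simp
qed

theorem theorem2: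
  fixes P :: "'a::euclidean_space set"
    and k z :: nat
    and \<epsilon>1 \<epsilon>2 \<eta> \<delta> c :: real
    and A :: "'a multiset \<Rightarrow> nat \<Rightarrow> 'a set"
  assumes finP: "finite P" and Pne: "P \<noteq> {}"
    and kpos: "k > 0"
    and eps: "\<epsilon>1 > 0" "\<epsilon>2 > 0"
    and sig: "significant P k z \<epsilon>1 \<epsilon>2"
    and eta: "0 < \<eta>" "\<eta> < 1"
    and delta: "0 < \<delta>" "\<delta> < 1"
    and c1: "c \<ge> 1"
    and approx: "\<And>Q w. finite (A Q w) \<and> card (A Q w) = k \<and>
                        Delta_out Q w (A Q w) \<le> c * kcenter_opt Q k w"
    and ratio: "\<epsilon>1 / \<epsilon>2 > 1 / (\<eta> * (1 - \<delta>))"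
  shows
    "let m = nat \<lceil>3 * real k / (\<delta>^2 * \<epsilon>1) * ln (2 * real k / \<eta>)\<rceil>;
         z' = nat \<lfloor>1 / \<eta> * (\<epsilon>2 / real k) * real m\<rfloor>;
         r_opt = kcenter_opt (mset_set P) k z
     in measure_pmf.prob (replicate_pmf m (pmf_of_set P))
          {xs. Delta_out (mset_set P) z (A (mset xs) z') \<le> (c + 2) * r_opt}
        \<ge> (1 - \<eta>)^2"
proof -
  define m where "m = nat \<lceil>3 * real k / (\<delta>^2 * \<epsilon>1) * ln (2 * real k / \<eta>)\<rceil>"
  define z' where "z' = nat \<lfloor>1 / \<eta> * (\<epsilon>2 / real k) * real m\<rfloor>"
  define r where "r = kcenter_opt (mset_set P) k z"
  define M where "M = replicate_pmf m (pmf_of_set P)"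
  obtain cs Cl Popt where cs: "inj_on cs {..<k}"
    and r: "Delta_out (mset_set P) z (cs ` {..<k}) = r"
    and inliers: "Popt \<subseteq> P" "card Popt = card P - z" "Popt = (\<Union>j<k. Cl j)"
    and radius: "\<forall>j<k. \<forall>p\<in>Cl j. dist p (cs j) \<le> r"
    and large: "\<forall>j<k. real (card (Cl j)) \<ge> \<epsilon>1 / real k * real (card P)"
    and z: "real z = \<epsilon>2 / real k * real (card P)"
    using sig unfolding significant_def Let_def r_def by blast
  have r0: "0 \<le> r"
    using r kpos Delta_out_nonneg[of "cs ` {..<k}"] by auto
  define few where "few = {xs. hits (P - Popt) xs \<le> z'}"
  define hit where "hit = {xs. \<forall>j<k. z' < hits (Cl j) xs}"
  define success where "success = {xs. Delta_out (mset_set P) z (A (mset xs) z') \<le> (c + 2) * r}"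
  have Cl_sub: "Cl j \<subseteq> Popt" if "j < k" for j
    using that inliers(3) by blast
  have few: "1 - \<eta> \<le> measure_pmf.prob M few"
    unfolding M_def few_def z'_def using finP Pne kpos eta eps inliers z
    by (intro prob_few_outliers) (auto simp: card_Diff_subset finite_subset)
  have "measure_pmf.prob M {xs. hits (Cl j) xs \<le> z'} \<le> \<eta> / (2 * real k)" if "j < k" for j
    unfolding M_def z'_def m_def using that finP Pne Cl_sub inliers kpos eps eta delta large ratio
    by (intro prob_cluster_undersampled) auto
  then have "1 - real k * (\<eta> / (2 * real k)) \<le> measure_pmf.prob M hit"
    unfolding hit_def by (rule prob_all_hits_gt)
  then have hit: "1 - \<eta> \<le> measure_pmf.prob M hit"
    using kpos eta by simp
  have "(1 - \<eta>)^2 \<le> measure_pmf.prob M few * measure_pmf.prob M hit"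
    using few hit eta by (simp add: power2_eq_square mult_mono)
  also have "\<dots> \<le> measure_pmf.prob M (few \<inter> hit)"
    unfolding M_def few_def hit_def using finP Pne Cl_sub
    by (intro harris_prob_hits_le) (auto intro: less_le_trans[OF _ hits_list_update_le])
  also have "\<dots> \<le> measure_pmf.prob M success"
  proof (intro measure_pmf.finite_measure_mono_AE AE_pmfI impI)
    fix xs assume "xs \<in> set_pmf M" "xs \<in> few \<inter> hit"
    moreover have "set xs \<subseteq> P"
      using \<open>xs \<in> set_pmf M\<close> finP Pne by (auto simp: M_def set_replicate_pmf)
    ultimately have "size {#p \<in># mset xs. p \<notin> Popt#} \<le> z'"
      and "\<And>j. j < k \<Longrightarrow> z' < size {#p \<in># mset xs. p \<in> Cl j#}"
      by (simp_all add: few_def hit_def size_filter_mset_mset_notin_eq_hits_Diff size_filter_mset_mset_eq_hits)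
    with approx c1 r0 radius show "xs \<in> success"
      unfolding success_def by (auto intro!: Delta_out_le_if_good_sample[OF finP kpos _ _ cs inliers])
  qed simp
  finally show ?thesis
    unfolding Let_def m_def[symmetric] z'_def[symmetric] r_def[symmetric] M_def[symmetric] success_def .
qed

end
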